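(* Fix $q\in Q$, $a\in A$ and $k$, write $\epsilon:=\varepsilon^s$, and consider $$G(\lambda,\mu):=\sum_{j\in\overline{\mathcal N}^{q,a}}\min\big\{\underline P(q,a,q_j)(h_j(\mu)-\lambda),\ \overline P(q,a,q_j)(h_j(\mu)-\lambda)\big\}-\mu\epsilon+\lambda,$$ $$h_j(\mu):=\min_{i\in\overline{\mathcal N}^{q,a}_W}\{\underline p^k(q_i)+\mu\,c(q_i,q_j)\},$$ for $\lambda\in\mathbb R$, $\mu\ge0$. Then $G$ is concave, the optimal value of $\max_{\mu\ge0,\lambda\in\mathbb R}G(\lambda,\mu)$ equals the optimal value of the linear program (LP) below, and for every $\mu\ge0$, $$\max_{\lambda\in\mathbb R}G(\lambda,\mu)=\max_{j\in\overline{\mathcal N}^{q,a}}G(h_j(\mu),\mu).$$ The linear program (LP) is: minimize $\sum_{i\in\overline{\mathcal N}^{q,a}_W}\gamma_i\underline p^k(q_i)$ over $\gamma_i,\widehat\gamma_j,\pi_{ij}$ subject to $\underline P(q,a,q_j)\le\widehat\gamma_j\le\overline P(q,a,q_j)$ ($j\in\overline{\mathcal N}^{q,a}$), $\sum_{j}\widehat\gamma_j=1$, $\pi_{ij}\ge0$, $\sum_{i\in\overline{\mathcal N}^{q,a}_W}\pi_{ij}=\widehat\gamma_j$ ($j\in\overline{\mathcal N}^{q,a}$), $\sum_{j\in\overline{\mathcal N}^{q,a}}\pi_{ij}=\gamma_i$ ($i\in\overline{\mathcal N}^{q,a}_W$), and $\sum_{i,j}\pi_{ij}c(q_i,q_j)\le\epsilon$,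 where $i$ ranges over $\overline{\mathcal N}^{q,a}_W$ and $j$ over $\overline{\mathcal N}^{q,a}$.
   Context: Fix $n\ge1$, $s\ge1$, $\varepsilon\ge0$, a finite mode set $U=\{1,\dots,m\}$, continuous $f_u:\mathbb R^n\to\mathbb R^n$, a nominal Borel probability $\widehat p_v$ on $\mathbb R^n$ with finite $s$-th moment, and a set $W\subseteq\mathbb R^n$ (containing the support of the true noise distribution). Let $T^u_{p_v}(B\mid x):=p_v(\{v:f_u(x)+v\in B\})$. Abstraction. $X\subset\mathbb R^n$ bounded Borel, $X_{\rm tgt}\subset X$; $Q_{\rm safe}$ a finite family of pairwise disjoint Borel sets with union $X$, each either contained in or disjoint from $X_{\rm tgt}$; $Q_{\rm tgt}$ those contained in $X_{\rm tgt}$; $q_u:=\mathbb R^n\setminus X$; $Q:=Q_{\rm safe}\cup\{q_u\}=\{q_1,\dots,q_N\}$ indexed by $\mathcal N=\{1,\dots,N\}$; $A:=U$. Bounds $\underline P\le\overline P$ in $[0,1]$ on $Q\times A\times Q$ with $\sum_{q'}\underline P(q,a,q')\le1\le\sum_{q'}\overline P(q,a,q')$, $\underline P(q,a,q')\le\inf_{x\in q}T^a_{\widehat p_v}(q'\mid x)$, $\overline P(q,a,q')\ge\sup_{x\in q}T^a_{\widehat p_v}(q'\mid x)$ for $q\in Q_{\rm safe}$, and $\underline P(q_u,a,q_u)=\overline P(q_u,a,q_u)=1$. Cost $c(q,q'):=\inf\{\|x-y\|^s:x\in q,y\in q'\}$ (Euclidean norm). Index sets: $\overline{\mathcal N}^{q,a}:=\{i:\overline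 P(q,a,q_i)>0\}$ and $\overline{\mathcal N}^{q,a}_W:=\{i:(f_a(q)+W)\cap q_i\ne\emptyset\}$, with $f_a(q)$ the image of $q$ under $f_a$; it is assumed that $\overline{\mathcal N}^{q,a}\subseteq\overline{\mathcal N}^{q,a}_W$ (the nominal distribution is supported in $W$). $\underline p^k:Q\to[0,1]$ is the $k$-th iterate of the robust dynamic programming recursion: $\underline p^0=\mathbf 1_{Q_{\rm tgt}}$, $\underline p^{k+1}(q)=1$ on $Q_{\rm tgt}$ and otherwise $\max_{a}\min_{\gamma\in\Gamma_{q,a}}\sum_{q'}\gamma(q')\underline p^k(q')$ (for the purposes of the claim only $\underline p^k\ge0$ matters). *)

theory Defs
  imports "HOL-Probability.Probability"
begin

definition trans_kernel ::
  "('a::euclidean_space) measure \<Rightarrow> (nat \<Rightarrow> 'a \<Rightarrow> 'a) \<Rightarrow> nat \<Rightarrow> 'a \<Rightarrow> 'a set \<Rightarrow> real" where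
  "trans_kernel pv f u x B = measure pv {v. f u x + v \<in> B}"

definition region_cost :: "real \<Rightarrow> ('a::euclidean_space) set \<Rightarrow> 'a set \<Rightarrow> real" where
  "region_cost s A B = Inf {norm (x - y) powr s | x y. x \<in> A \<and> y \<in> B}"

definition reach_set :: "('a \<Rightarrow> 'a) \<Rightarrow> ('a::euclidean_space) set \<Rightarrow> 'a set \<Rightarrow> 'a set" where
  "reach_set g A W = {g x + w | x w. x \<in> A \<and> w \<in> W}"

definition hfun :: "(nat \<Rightarrow> real) \<Rightarrow> (nat \<Rightarrow> nat \<Rightarrow> real) \<Rightarrow> nat set \<Rightarrow> nat \<Rightarrow> real \<Rightarrow> real" where
  "hfun p c I j \<mu> = Min ((\<lambda>i. p i + \<mu> * c i j) ` I)"

text \<open>G(lambda, mu); lo j, hi j stand for underline P(q,a,q_j), overline P(q,a,q_j).\<close>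
definition Gfun :: "(nat \<Rightarrow> real) \<Rightarrow> (nat \<Rightarrow> real) \<Rightarrow> (nat \<Rightarrow> real) \<Rightarrow> (nat \<Rightarrow> nat \<Rightarrow> real)
    \<Rightarrow> nat set \<Rightarrow> nat set \<Rightarrow> real \<Rightarrow> real \<Rightarrow> real \<Rightarrow> real" where
  "Gfun lo hi p c I J eps lam \<mu> =
     (\<Sum>j\<in>J. min (lo j * (hfun p c I j \<mu> - lam)) (hi j * (hfun p c I j \<mu> - lam))) - \<mu> * eps + lam"

definition lp_feasible :: "(nat \<Rightarrow> real) \<Rightarrow> (nat \<Rightarrow> real) \<Rightarrow> (nat \<Rightarrow> nat \<Rightarrow> real)
    \<Rightarrow> nat set \<Rightarrow> nat set \<Rightarrow> real
    \<Rightarrow> (nat \<Rightarrow> real) \<Rightarrow> (nat \<Rightarrow> real) \<Rightarrow> (nat \<Rightarrow> nat \<Rightarrow> real) \<Rightarrow> bool" where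
  "lp_feasible lo hi c I J eps \<gamma> \<gamma>h \<pi> \<longleftrightarrow>
     (\<forall>j\<in>J. lo j \<le> \<gamma>h j \<and> \<gamma>h j \<le> hi j) \<and>
     (\<Sum>j\<in>J. \<gamma>h j) = 1 \<and>
     (\<forall>i\<in>I. \<forall>j\<in>J. 0 \<le> \<pi> i j) \<and>
     (\<forall>j\<in>J. (\<Sum>i\<in>I. \<pi> i j) = \<gamma>h j) \<and>
     (\<forall>i\<in>I. (\<Sum>j\<in>J. \<pi> i j) = \<gamma> i) \<and>
     (\<Sum>i\<in>I. \<Sum>j\<in>J. \<pi> i j * c i j) \<le> eps"

definition lp_objective :: "(nat \<Rightarrow> real) \<Rightarrow> nat set \<Rightarrow> (nat \<Rightarrow> real) \<Rightarrow> real" where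
  "lp_objective p I \<gamma> = (\<Sum>i\<in>I. \<gamma> i * p i)"

definition cost_mat :: "real \<Rightarrow> (nat \<Rightarrow> ('a::euclidean_space) set) \<Rightarrow> nat \<Rightarrow> nat \<Rightarrow> real" where
  "cost_mat s R i j = region_cost s (R i) (R j)"

definition idx_W :: "nat \<Rightarrow> (nat \<Rightarrow> 'a \<Rightarrow> 'a) \<Rightarrow> (nat \<Rightarrow> ('a::euclidean_space) set) \<Rightarrow> 'a set
    \<Rightarrow> nat \<Rightarrow> nat \<Rightarrow> nat set" where
  "idx_W N f R W q u = {i\<in>{1..N}. reach_set (f u) (R q) W \<inter> R i \<noteq> {}}"

definition idx_P :: "nat \<Rightarrow> (nat \<Rightarrow> nat \<Rightarrow> nat \<Rightarrow> real) \<Rightarrow> nat \<Rightarrow> nat \<Rightarrow> nat set" where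
  "idx_P N hi q u = {i\<in>{1..N}. hi q u i > 0}"

end

theory Submission
  imports Defs
begin

text \<open>For fixed \<open>\<mu>\<close> the inner problem \<open>min {\<Sum>j. g j * v j | lo \<le> g \<le> hi, \<Sum>j. g j = 1}\<close>
  is solved greedily, and its dual in the multiplier \<open>\<lambda>\<close> of \<open>\<Sum>j. g j = 1\<close> is maximal at
  \<open>\<lambda> = v j0\<close> for the index \<open>j0\<close> at which the greedy filling reaches mass \<open>1\<close>;
  this gives the formula for \<open>max\<^sub>\<lambda> G \<lambda> \<mu>\<close>. \<open>G\<close> is concave because each \<open>h\<^sub>j\<close>
  is a minimum of affine functions of \<open>\<mu>\<close> and \<open>t \<mapsto> min (lo * t) (hi * t)\<close> is concave and
  nondecreasing. Weak duality follows from \<open>h\<^sub>j \<mu> \<le> p i + \<mu> * c i j\<close>. For strong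
  duality, the optimal value \<open>V e\<close> of the LP with transport budget \<open>e\<close> is convex,
  nonincreasing and Lipschitz from the right (mass moved at positive cost can be put back
  on the diagonal at a price proportional to that cost), so it has a subgradient
  \<open>-\<mu>\<close> at \<open>\<epsilon>\<^sup>s\<close>, even when \<open>\<epsilon> = 0\<close>; this \<open>\<mu>\<close> is an optimal multiplier.\<close>

section \<open>Linear optimisation over a box-constrained simplex\<close>

definition box_simplex :: "('a \<Rightarrow> real) \<Rightarrow> ('a \<Rightarrow> real) \<Rightarrow> 'a set \<Rightarrow> ('a \<Rightarrow> real) \<Rightarrow> bool" where
  "box_simplex lo hi J g \<longleftrightarrow> (\<forall>j\<in>J. lo j \<le> g j \<and> g j \<le> hi j) \<and> (\<Sum>j\<in>J. g j) = 1"

definition box_simplex_dual :: "('a \<Rightarrow> real) \<Rightarrow> ('a \<Rightarrow> real) \<Rightarrow> 'a set \<Rightarrow> ('a \<Rightarrow> real) \<Rightarrow> real \<Rightarrow> real" where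
  "box_simplex_dual lo hi J v l = (\<Sum>j\<in>J. min (lo j * (v j - l)) (hi j * (v j - l))) + l"

lemma min_mult_le_mult:
  fixes a b g x :: real
  assumes "a \<le> g" "g \<le> b"
  shows "min (a * x) (b * x) \<le> g * x"
proof (cases "0 \<le> x")
  case True
  then show ?thesis using assms(1) by (simp add: min.coboundedI1 mult_right_mono)
next
  case False
  then show ?thesis using assms(2) by (simp add: min.coboundedI2 mult_right_mono_neg)
qed

lemma box_simplex_dual_le:
  assumes "box_simplex lo hi J g"
  shows "box_simplex_dual lo hi J v l \<le> (\<Sum>j\<in>J. g j * v j)"
proof -
  have "(\<Sum>j\<in>J. min (lo j * (v j - l)) (hi j * (v j - l))) \<le> (\<Sum>j\<in>J. g j * (v j - l))"
    using assms by (intro sum_mono min_mult_le_mult) (auto simp: box_simplex_def)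
  also have "\<dots> = (\<Sum>j\<in>J. g j * v j) - l"
    using assms by (simp add: box_simplex_def right_diff_distrib sum_subtractf flip: sum_distrib_right)
  finally show ?thesis by (simp add: box_simplex_dual_def)
qed

lemma box_simplex_threshold_exists:
  fixes v lo hi :: "'a \<Rightarrow> real"
  assumes "finite J" and lo: "(\<Sum>j\<in>J. lo j) \<le> 1" and hi: "1 \<le> (\<Sum>j\<in>J. hi j)"
  shows "\<exists>j0\<in>J. (\<Sum>j\<in>J. if v j < v j0 then hi j else lo j) \<le> 1
               \<and> 1 \<le> (\<Sum>j\<in>J. if v j \<le> v j0 then hi j else lo j)"
proof -
  define A where "A t = (\<Sum>j\<in>J. if v j \<le> t then hi j else lo j)" for t
  define T where "T = {j\<in>J. 1 \<le> A (v j)}"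
  have "J \<noteq> {}" using hi by auto
  then obtain jmax where "jmax \<in> J" "\<forall>j\<in>J. v j \<le> v jmax"
    using ex_is_arg_min_if_finite[OF assms(1), of "\<lambda>j. - v j"] by (auto simp: is_arg_min_linorder)
  then have "jmax \<in> T" using hi by (simp add: T_def A_def)
  then obtain j0 where j0: "j0 \<in> T" and least: "\<forall>j\<in>T. v j0 \<le> v j"
    using ex_is_arg_min_if_finite[of T v] assms(1) by (auto simp: T_def is_arg_min_linorder)
  have "(\<Sum>j\<in>J. if v j < v j0 then hi j else lo j) \<le> 1"
  proof (cases "\<exists>j\<in>J. v j < v j0")
    case True
    then obtain j1 where j1: "j1 \<in> J" "v j1 < v j0" and max: "\<forall>j\<in>J. v j < v j0 \<longrightarrow> v j \<le> v j1"
      using ex_is_arg_min_if_finite[of "{j\<in>J. v j < v j0}" "\<lambda>j. - v j"] assms(1)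
      by (auto simp: is_arg_min_linorder)
    have "j1 \<notin> T" using least j1 by force
    then have "A (v j1) < 1" using j1 by (simp add: T_def)
    moreover have "A (v j1) = (\<Sum>j\<in>J. if v j < v j0 then hi j else lo j)"
      unfolding A_def using max j1(2) by (intro sum.cong) force+
    ultimately show ?thesis by simp
  next
    case False
    then have "(\<Sum>j\<in>J. if v j < v j0 then hi j else lo j) = (\<Sum>j\<in>J. lo j)"
      by (intro sum.cong) auto
    then show ?thesis using lo by simp
  qed
  then show ?thesis using j0 by (auto simp: T_def A_def)
qed

lemma box_simplex_at_threshold:
  fixes v lo hi :: "'a \<Rightarrow> real"
  assumes lo_hi: "\<forall>j\<in>J. lo j \<le> hi j"
    and below: "(\<Sum>j\<in>J. if v j < t then hi j else lo j) \<le> 1"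
    and upto: "1 \<le> (\<Sum>j\<in>J. if v j \<le> t then hi j else lo j)"
  obtains g where "box_simplex lo hi J g"
    and "\<forall>j\<in>J. v j < t \<longrightarrow> g j = hi j" and "\<forall>j\<in>J. t < v j \<longrightarrow> g j = lo j"
proof -
  define B where "B = (\<Sum>j\<in>J. if v j < t then hi j else lo j)"
  define D where "D = (\<Sum>j\<in>J. if v j = t then hi j - lo j else 0)"
  have "(\<Sum>j\<in>J. if v j \<le> t then hi j else lo j) = B + D"
    unfolding B_def D_def sum.distrib[symmetric] by (intro sum.cong) auto
  then have BD: "B \<le> 1" "1 \<le> B + D" using below upto by (simp_all only: B_def)
  define \<theta> where "\<theta> = (if D = 0 then 0 else (1 - B) / D)"
  have \<theta>: "0 \<le> \<theta> \<and> \<theta> \<le> 1 \<and> B + \<theta> * D = 1"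
  proof (cases "D = 0")
    case False
    then have "0 < D" using BD by simp
    then show ?thesis using BD by (simp add: \<theta>_def field_simps)
  qed (use BD in \<open>simp add: \<theta>_def\<close>)
  define g where
    "g j = (if v j < t then hi j else if v j = t then lo j + \<theta> * (hi j - lo j) else lo j)" for j
  have "lo j \<le> g j \<and> g j \<le> hi j" if "j \<in> J" for j
  proof -
    have "0 \<le> \<theta> * (hi j - lo j)" "\<theta> * (hi j - lo j) \<le> hi j - lo j"
      using \<theta> lo_hi that by (auto simp: mult_left_le_one_le)
    then show ?thesis using lo_hi that by (auto simp: g_def)
  qed
  moreover have "(\<Sum>j\<in>J. g j) = B + \<theta> * D"
    unfolding B_def D_def sum_distrib_left sum.distrib[symmetric] by (intro sum.cong) (auto simp: g_def)
  ultimately have "box_simplex lo hi J g" using \<theta> by (simp add: box_simplex_def)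
  then show ?thesis by (rule that) (auto simp: g_def)
qed

lemma box_simplex_dual_attained:
  fixes v lo hi :: "'a \<Rightarrow> real"
  assumes "finite J" and lo_hi: "\<forall>j\<in>J. lo j \<le> hi j"
    and "(\<Sum>j\<in>J. lo j) \<le> 1" and "1 \<le> (\<Sum>j\<in>J. hi j)"
  shows "\<exists>j0\<in>J. \<exists>g. box_simplex lo hi J g \<and> box_simplex_dual lo hi J v (v j0) = (\<Sum>j\<in>J. g j * v j)"
proof -
  obtain j0 where "j0 \<in> J" and thr: "(\<Sum>j\<in>J. if v j < v j0 then hi j else lo j) \<le> 1"
    "1 \<le> (\<Sum>j\<in>J. if v j \<le> v j0 then hi j else lo j)"
    using box_simplex_threshold_exists[OF assms(1,3,4)] by blast
  obtain g where g: "box_simplex lo hi J g"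
    and below: "\<forall>j\<in>J. v j < v j0 \<longrightarrow> g j = hi j" and above: "\<forall>j\<in>J. v j0 < v j \<longrightarrow> g j = lo j"
    using box_simplex_at_threshold[OF lo_hi thr] .
  have "min (lo j * (v j - v j0)) (hi j * (v j - v j0)) = g j * (v j - v j0)" if "j \<in> J" for j
  proof (cases "v j < v j0")
    case True
    then have "hi j * (v j - v j0) \<le> lo j * (v j - v j0)"
      using lo_hi that by (simp add: mult_right_mono_neg)
    then show ?thesis using True below that by (simp add: min_def)
  next
    case False
    then have "lo j * (v j - v j0) \<le> hi j * (v j - v j0)"
      using lo_hi that by (simp add: mult_right_mono)
    then show ?thesis using False above that by (cases "v j = v j0") (simp_all add: min_def)
  qed
  then have "box_simplex_dual lo hi J v (v j0) = (\<Sum>j\<in>J. g j * (v j - v j0)) + v j0"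
    by (simp add: box_simplex_dual_def)
  also have "\<dots> = (\<Sum>j\<in>J. g j * v j)"
    using g by (simp add: box_simplex_def right_diff_distrib sum_subtractf flip: sum_distrib_right)
  finally show ?thesis using \<open>j0 \<in> J\<close> g by blast
qed

section \<open>The dual function\<close>

lemma hfun_le:
  assumes "finite I" "i \<in> I"
  shows "hfun p c I j \<mu> \<le> p i + \<mu> * c i j"
  unfolding hfun_def using assms by (intro Min_le) auto

lemma hfun_attained:
  assumes "finite I" "I \<noteq> {}"
  shows "\<exists>i\<in>I. hfun p c I j \<mu> = p i + \<mu> * c i j"
proof -
  have "hfun p c I j \<mu> \<in> (\<lambda>i. p i + \<mu> * c i j) ` I"
    unfolding hfun_def using assms by (intro Min_in) auto
  then show ?thesis by auto
qed

lemma concave_on_hfun: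
  assumes "finite I" "I \<noteq> {}"
  shows "concave_on UNIV (hfun p c I j)"
  unfolding concave_on_iff
proof (intro conjI ballI allI impI)
  fix m1 m2 u v :: real
  assume u: "0 \<le> u" and v: "0 \<le> v" and uv: "u + v = 1"
  show "u * hfun p c I j m1 + v * hfun p c I j m2 \<le> hfun p c I j (u *\<^sub>R m1 + v *\<^sub>R m2)"
    unfolding hfun_def[of p c I j "u *\<^sub>R m1 + v *\<^sub>R m2"]
  proof (rule Min.boundedI)
    fix y assume "y \<in> (\<lambda>i. p i + (u *\<^sub>R m1 + v *\<^sub>R m2) * c i j) ` I"
    then obtain i where i: "i \<in> I" and y: "y = p i + (u * m1 + v * m2) * c i j" by auto
    have "u * hfun p c I j m1 + v * hfun p c I j m2 \<le> u * (p i + m1 * c i j) + v * (p i + m2 * c i j)"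
      using hfun_le[OF assms(1) i] u v by (intro add_mono mult_left_mono)
    also have "\<dots> = y" using uv by (simp add: y algebra_simps flip: distrib_right)
    finally show "u * hfun p c I j m1 + v * hfun p c I j m2 \<le> y" .
  qed (use assms in auto)
qed simp

lemma min_mult_concave:
  fixes a b s t u v :: real
  assumes "0 \<le> u" "0 \<le> v" "u + v = 1"
  shows "u * min (a * s) (b * s) + v * min (a * t) (b * t) \<le> min (a * (u * s + v * t)) (b * (u * s + v * t))"
proof (rule min.boundedI)
  have "u * min (a * s) (b * s) \<le> u * (a * s)" "v * min (a * t) (b * t) \<le> v * (a * t)"
    using assms by (simp_all add: mult_left_mono)
  then show "u * min (a * s) (b * s) + v * min (a * t) (b * t) \<le> a * (u * s + v * t)"
    by (simp add: algebra_simps)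
  have "u * min (a * s) (b * s) \<le> u * (b * s)" "v * min (a * t) (b * t) \<le> v * (b * t)"
    using assms by (simp_all add: mult_left_mono)
  then show "u * min (a * s) (b * s) + v * min (a * t) (b * t) \<le> b * (u * s + v * t)"
    by (simp add: algebra_simps)
qed

lemma min_mult_mono:
  fixes a b s t :: real
  shows "0 \<le> a \<Longrightarrow> a \<le> b \<Longrightarrow> s \<le> t \<Longrightarrow> min (a * s) (b * s) \<le> min (a * t) (b * t)"
  by (meson min.mono mult_left_mono order_trans)

lemma Gfun_eq_box_simplex_dual:
  "Gfun lo hi p c I J eps l \<mu> = box_simplex_dual lo hi J (\<lambda>j. hfun p c I j \<mu>) l - \<mu> * eps"
  by (simp add: Gfun_def box_simplex_dual_def)

lemma Gfun_max_at_hfun: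
  fixes lo hi p :: "nat \<Rightarrow> real" and c :: "nat \<Rightarrow> nat \<Rightarrow> real" and I J :: "nat set" and eps \<mu> :: real
  assumes "finite J" "\<forall>j\<in>J. lo j \<le> hi j" "(\<Sum>j\<in>J. lo j) \<le> 1" "1 \<le> (\<Sum>j\<in>J. hi j)"
  defines "G \<equiv> Gfun lo hi p c I J eps" and "h \<equiv> \<lambda>j. hfun p c I j \<mu>"
  shows "(\<forall>l. G l \<mu> \<le> (MAX j\<in>J. G (h j) \<mu>)) \<and> (\<exists>l. G l \<mu> = (MAX j\<in>J. G (h j) \<mu>))"
proof
  have "J \<noteq> {}" using assms(4) by auto
  obtain j0 g where "j0 \<in> J" "box_simplex lo hi J g"
    and j0: "box_simplex_dual lo hi J h (h j0) = (\<Sum>j\<in>J. g j * h j)"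
    using box_simplex_dual_attained[OF assms(1-4)] by blast
  show "\<forall>l. G l \<mu> \<le> (MAX j\<in>J. G (h j) \<mu>)"
  proof
    fix l
    have "G l \<mu> \<le> G (h j0) \<mu>"
      using box_simplex_dual_le[OF \<open>box_simplex lo hi J g\<close>, of h l] j0
      by (simp add: G_def h_def Gfun_eq_box_simplex_dual)
    also have "\<dots> \<le> (MAX j\<in>J. G (h j) \<mu>)" using assms(1) \<open>j0 \<in> J\<close> by (intro Max_ge) auto
    finally show "G l \<mu> \<le> (MAX j\<in>J. G (h j) \<mu>)" .
  qed
  have "(MAX j\<in>J. G (h j) \<mu>) \<in> (\<lambda>j. G (h j) \<mu>) ` J"
    using assms(1) \<open>J \<noteq> {}\<close> by (intro Max_in) auto
  then show "\<exists>l. G l \<mu> = (MAX j\<in>J. G (h j) \<mu>)" by force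
qed

lemma concave_on_Gfun:
  fixes lo hi p :: "nat \<Rightarrow> real" and c :: "nat \<Rightarrow> nat \<Rightarrow> real" and I J :: "nat set" and eps :: real
  assumes "finite I" "I \<noteq> {}" and lo_hi: "\<forall>j\<in>J. 0 \<le> lo j \<and> lo j \<le> hi j"
  shows "concave_on UNIV (\<lambda>(l, \<mu>). Gfun lo hi p c I J eps l \<mu>)"
  unfolding concave_on_iff
proof (intro conjI ballI allI impI)
  fix x y :: "real \<times> real" and u v :: real
  assume u: "0 \<le> u" and v: "0 \<le> v" and uv: "u + v = 1"
  obtain l1 m1 l2 m2 where xy: "x = (l1, m1)" "y = (l2, m2)" by fastforce
  define G where "G = Gfun lo hi p c I J eps"
  define h where "h j \<mu> = hfun p c I j \<mu>" for j \<mu>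
  define \<phi> where "\<phi> j t = min (lo j * t) (hi j * t)" for j t
  have \<phi>: "u * \<phi> j (h j m1 - l1) + v * \<phi> j (h j m2 - l2) \<le> \<phi> j (h j (u * m1 + v * m2) - (u * l1 + v * l2))"
    if "j \<in> J" for j
  proof -
    have "u * h j m1 + v * h j m2 \<le> h j (u * m1 + v * m2)"
      using concave_on_hfun[OF assms(1,2)] u v uv by (simp add: concave_on_iff h_def)
    then have "u * (h j m1 - l1) + v * (h j m2 - l2) \<le> h j (u * m1 + v * m2) - (u * l1 + v * l2)"
      by (simp add: algebra_simps)
    then show ?thesis
      using min_mult_concave[OF u v uv] min_mult_mono lo_hi that unfolding \<phi>_def by (meson order_trans)
  qed
  have "u * G l1 m1 + v * G l2 m2
      = (\<Sum>j\<in>J. u * \<phi> j (h j m1 - l1) + v * \<phi> j (h j m2 - l2)) - (u * m1 + v * m2) * eps + (u * l1 + v * l2)"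
    by (simp add: G_def Gfun_def \<phi>_def h_def sum.distrib sum_distrib_left algebra_simps)
  also have "\<dots> \<le> (\<Sum>j\<in>J. \<phi> j (h j (u * m1 + v * m2) - (u * l1 + v * l2))) - (u * m1 + v * m2) * eps + (u * l1 + v * l2)"
    using \<phi> by (simp add: sum_mono)
  also have "\<dots> = G (u * l1 + v * l2) (u * m1 + v * m2)"
    by (simp add: G_def Gfun_def \<phi>_def h_def)
  finally show "u * (case x of (l, \<mu>) \<Rightarrow> Gfun lo hi p c I J eps l \<mu>) + v * (case y of (l, \<mu>) \<Rightarrow> Gfun lo hi p c I J eps l \<mu>)
      \<le> (case u *\<^sub>R x + v *\<^sub>R y of (l, \<mu>) \<Rightarrow> Gfun lo hi p c I J eps l \<mu>)"
    by (simp add: xy G_def)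
qed simp

section \<open>Transport plans and the optimal value function\<close>

lemma convex_on_antimono_subgradient:
  fixes V :: "real \<Rightarrow> real"
  assumes convex: "convex_on {0..} V" and "0 \<le> x"
    and antimono: "\<And>y. x \<le> y \<Longrightarrow> V y \<le> V x"
    and lipschitz: "\<And>y. x \<le> y \<Longrightarrow> V x - V y \<le> M * (y - x)"
  shows "\<exists>\<mu>\<ge>0. \<forall>y\<ge>0. V x - \<mu> * (y - x) \<le> V y"
proof -
  define slope where "slope y = (V x - V y) / (y - x)" for y
  define \<mu> where "\<mu> = (SUP y\<in>{x<..}. slope y)"
  have "bdd_above (slope ` {x<..})"
    using lipschitz by (intro bdd_aboveI2[of _ _ M]) (simp add: slope_def pos_divide_le_eq mult.commute)
  then have right: "slope y \<le> \<mu>" if "x < y" for y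
    unfolding \<mu>_def using that by (intro cSUP_upper) auto
  have left: "\<mu> \<le> (V y - V x) / (x - y)" if "0 \<le> y" "y < x" for y
    unfolding \<mu>_def
  proof (rule cSUP_least)
    fix y' assume "y' \<in> {x<..}"
    then have "(V y - V x) / (y - x) \<le> (V x - V y') / (x - y')"
      using convex_on_slope_le[OF convex, of y y' x] that \<open>0 \<le> x\<close> by auto
    moreover have "(V y - V x) / (y - x) = - ((V y - V x) / (x - y))"
      and "(V x - V y') / (x - y') = - ((V x - V y') / (y' - x))"
      by (metis divide_minus_right minus_diff_eq)+
    ultimately show "slope y' \<le> (V y - V x) / (x - y)" by (simp add: slope_def)
  qed simp
  have "0 \<le> slope (x + 1)" using antimono[of "x + 1"] by (simp add: slope_def)
  also have "\<dots> \<le> \<mu>" by (rule right) simp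
  finally have "0 \<le> \<mu>" .
  moreover have "V x - \<mu> * (y - x) \<le> V y" if "0 \<le> y" for y
  proof (cases y x rule: linorder_cases)
    case less
    then show ?thesis using left[OF that less] by (simp add: pos_le_divide_eq algebra_simps)
  next
    case greater
    then show ?thesis using right[OF greater] by (simp add: slope_def pos_divide_le_eq algebra_simps)
  qed simp
  ultimately show ?thesis by blast
qed

lemma continuous_on_apply2: "continuous_on S (\<lambda>\<pi>::'a \<Rightarrow> 'b \<Rightarrow> 'c::topological_space. \<pi> i j)"
proof -
  have "continuous_on UNIV (\<lambda>\<pi>::'a \<Rightarrow> 'b \<Rightarrow> 'c. \<pi> i)" by simp
  then have "continuous_on UNIV (\<lambda>\<pi>::'a \<Rightarrow> 'b \<Rightarrow> 'c. \<pi> i j)"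
    by (rule continuous_on_product_then_coordinatewise)
  then show ?thesis by (rule continuous_on_subset) simp
qed

lemma compact_box_fun2:
  assumes "\<And>i j. compact (B i j :: 'c::topological_space set)"
  shows "compact {\<pi>::'a \<Rightarrow> 'b \<Rightarrow> 'c. \<forall>i j. \<pi> i j \<in> B i j}"
proof -
  have "compact (PiE UNIV (B i))" for i
    using compactin_PiE[of "\<lambda>_. euclidean" UNIV "B i"] assms by (simp add: euclidean_product_topology)
  then have "compact (PiE UNIV (\<lambda>i. PiE UNIV (B i)))"
    using compactin_PiE[of "\<lambda>_. euclidean" UNIV "\<lambda>i. PiE UNIV (B i)"] by (simp add: euclidean_product_topology)
  also have "PiE UNIV (\<lambda>i. PiE UNIV (B i)) = {\<pi>. \<forall>i j. \<pi> i j \<in> B i j}"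
    by (auto simp: PiE_iff)
  finally show ?thesis .
qed

lemma closed_Collect_ball: "(\<And>i. i \<in> A \<Longrightarrow> closed {x. P i x}) \<Longrightarrow> closed {x. \<forall>i\<in>A. P i x}"
proof -
  assume "\<And>i. i \<in> A \<Longrightarrow> closed {x. P i x}"
  then have "closed (\<Inter>i\<in>A. {x. P i x})" by (intro closed_INT) auto
  moreover have "(\<Inter>i\<in>A. {x. P i x}) = {x. \<forall>i\<in>A. P i x}" by auto
  ultimately show ?thesis by simp
qed

lemma sum_selection:
  fixes g :: "'b \<Rightarrow> real"
  assumes "finite I" "\<forall>j\<in>J. sel j \<in> I"
  shows "(\<Sum>i\<in>I. \<Sum>j\<in>J. (if i = sel j then g j else 0) * w i j) = (\<Sum>j\<in>J. g j * w (sel j) j)"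
proof -
  have "(\<Sum>i\<in>I. \<Sum>j\<in>J. (if i = sel j then g j else 0) * w i j) = (\<Sum>j\<in>J. \<Sum>i\<in>I. if i = sel j then g j * w i j else 0)"
    by (subst sum.swap) (intro sum.cong refl; simp)
  also have "\<dots> = (\<Sum>j\<in>J. g j * w (sel j) j)"
    using assms by (intro sum.cong refl) simp
  finally show ?thesis .
qed

locale box_transport =
  fixes lo hi p :: "nat \<Rightarrow> real" and c :: "nat \<Rightarrow> nat \<Rightarrow> real" and I J :: "nat set"
  assumes finite_I: "finite I" and J_subset_I: "J \<subseteq> I"
    and lo_nonneg: "\<forall>j\<in>J. 0 \<le> lo j" and lo_le_hi: "\<forall>j\<in>J. lo j \<le> hi j"
    and sum_lo_le: "(\<Sum>j\<in>J. lo j) \<le> 1" and sum_hi_ge: "1 \<le> (\<Sum>j\<in>J. hi j)"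
    and cost_nonneg: "\<forall>i\<in>I. \<forall>j\<in>J. 0 \<le> c i j" and cost_diag: "\<forall>j\<in>J. c j j = 0"
begin

lemma finite_J: "finite J"
  using finite_I J_subset_I by (rule finite_subset[rotated])

lemma I_nonempty: "I \<noteq> {}"
  using sum_hi_ge J_subset_I by auto

definition plan :: "(nat \<Rightarrow> nat \<Rightarrow> real) \<Rightarrow> bool" where
  "plan \<pi> \<longleftrightarrow> (\<forall>i\<in>I. \<forall>j\<in>J. 0 \<le> \<pi> i j) \<and> box_simplex lo hi J (\<lambda>j. \<Sum>i\<in>I. \<pi> i j)"

definition plan_objective :: "(nat \<Rightarrow> nat \<Rightarrow> real) \<Rightarrow> real" where
  "plan_objective \<pi> = (\<Sum>i\<in>I. \<Sum>j\<in>J. \<pi> i j * p i)"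

definition plan_cost :: "(nat \<Rightarrow> nat \<Rightarrow> real) \<Rightarrow> real" where
  "plan_cost \<pi> = (\<Sum>i\<in>I. \<Sum>j\<in>J. \<pi> i j * c i j)"

definition lp_value :: "real \<Rightarrow> real" where
  "lp_value e = (INF \<pi>\<in>{\<pi>. plan \<pi> \<and> plan_cost \<pi> \<le> e}. plan_objective \<pi>)"

lemma plan_mix:
  assumes "plan \<pi>1" "plan \<pi>2" "0 \<le> u" "0 \<le> v" "u + v = 1"
  shows "plan (\<lambda>i j. u * \<pi>1 i j + v * \<pi>2 i j)"
proof -
  have colsum: "(\<Sum>i\<in>I. u * \<pi>1 i j + v * \<pi>2 i j) = u * (\<Sum>i\<in>I. \<pi>1 i j) + v * (\<Sum>i\<in>I. \<pi>2 i j)" for j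
    by (simp add: sum.distrib sum_distrib_left)
  have "lo j \<le> u * (\<Sum>i\<in>I. \<pi>1 i j) + v * (\<Sum>i\<in>I. \<pi>2 i j) \<and> u * (\<Sum>i\<in>I. \<pi>1 i j) + v * (\<Sum>i\<in>I. \<pi>2 i j) \<le> hi j"
    if "j \<in> J" for j
  proof -
    let ?a = "\<Sum>i\<in>I. \<pi>1 i j" and ?b = "\<Sum>i\<in>I. \<pi>2 i j"
    have "lo j \<le> ?a" "?a \<le> hi j" "lo j \<le> ?b" "?b \<le> hi j"
      using assms(1,2) that by (auto simp: plan_def box_simplex_def)
    then have "u * lo j + v * lo j \<le> u * ?a + v * ?b" "u * ?a + v * ?b \<le> u * hi j + v * hi j"
      using assms(3,4) by (intro add_mono mult_left_mono; simp)+
    then show ?thesis using assms(5) by (simp flip: distrib_right)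
  qed
  moreover have "(\<Sum>j\<in>J. u * (\<Sum>i\<in>I. \<pi>1 i j) + v * (\<Sum>i\<in>I. \<pi>2 i j)) = 1"
    using assms by (simp add: plan_def box_simplex_def sum.distrib flip: sum_distrib_left)
  ultimately show ?thesis using assms by (simp add: plan_def box_simplex_def colsum)
qed

lemma plan_objective_mix [simp]:
  "plan_objective (\<lambda>i j. u * \<pi>1 i j + v * \<pi>2 i j) = u * plan_objective \<pi>1 + v * plan_objective \<pi>2"
  by (simp add: plan_objective_def sum.distrib sum_distrib_left distrib_right mult.assoc)

lemma plan_cost_mix [simp]:
  "plan_cost (\<lambda>i j. u * \<pi>1 i j + v * \<pi>2 i j) = u * plan_cost \<pi>1 + v * plan_cost \<pi>2"
  by (simp add: plan_cost_def sum.distrib sum_distrib_left distrib_right mult.assoc)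

lemma plan_cost_nonneg: "plan \<pi> \<Longrightarrow> 0 \<le> plan_cost \<pi>"
  unfolding plan_cost_def plan_def using cost_nonneg by (intro sum_nonneg) auto

lemma plan_of_selection:
  assumes sel: "\<forall>j\<in>J. sel j \<in> I" and g: "box_simplex lo hi J g"
  defines "\<sigma> \<equiv> \<lambda>i j. if i = sel j then g j else 0"
  shows "plan \<sigma>" and "plan_objective \<sigma> = (\<Sum>j\<in>J. g j * p (sel j))"
    and "plan_cost \<sigma> = (\<Sum>j\<in>J. g j * c (sel j) j)"
proof -
  have "(\<Sum>i\<in>I. \<sigma> i j) = g j" if "j \<in> J" for j
    using sel finite_I that by (simp add: \<sigma>_def)
  moreover have "0 \<le> g j" if "j \<in> J" for j
    using g lo_nonneg that by (meson box_simplex_def order_trans)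
  ultimately show "plan \<sigma>" using g by (simp add: plan_def \<sigma>_def box_simplex_def)
  show "plan_objective \<sigma> = (\<Sum>j\<in>J. g j * p (sel j))"
    unfolding plan_objective_def \<sigma>_def by (rule sum_selection[OF finite_I sel])
  show "plan_cost \<sigma> = (\<Sum>j\<in>J. g j * c (sel j) j)"
    unfolding plan_cost_def \<sigma>_def by (rule sum_selection[OF finite_I sel])
qed

lemma zero_cost_plan_exists: "\<exists>\<pi>. plan \<pi> \<and> plan_cost \<pi> = 0"
proof -
  obtain g where "box_simplex lo hi J g"
    using box_simplex_dual_attained[OF finite_J lo_le_hi sum_lo_le sum_hi_ge] by blast
  then show ?thesis
    using plan_of_selection[of "\<lambda>j. j" g] J_subset_I cost_diag by auto
qed

lemma compact_supported_plans:
  "compact {\<pi>. plan \<pi> \<and> plan_cost \<pi> \<le> e \<and> (\<forall>i j. \<not> (i \<in> I \<and> j \<in> J) \<longrightarrow> \<pi> i j = 0)}"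
    (is "compact ?S")
proof -
  define B where "B i j = (if i \<in> I \<and> j \<in> J then {0..hi j} else {0})" for i j
  have S_sub: "?S \<subseteq> {\<pi>. \<forall>i j. \<pi> i j \<in> B i j}"
  proof (safe)
    fix \<pi> i j assume "plan \<pi>" and zero: "\<forall>i j. \<not> (i \<in> I \<and> j \<in> J) \<longrightarrow> \<pi> i j = 0"
    show "\<pi> i j \<in> B i j"
    proof (cases "i \<in> I \<and> j \<in> J")
      case True
      then have "0 \<le> \<pi> i j" "\<pi> i j \<le> (\<Sum>i'\<in>I. \<pi> i' j)" "(\<Sum>i'\<in>I. \<pi> i' j) \<le> hi j"
        using \<open>plan \<pi>\<close> finite_I by (auto simp: plan_def box_simplex_def intro!: member_le_sum)
      then show ?thesis using True by (simp add: B_def)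
    qed (use zero in \<open>auto simp: B_def\<close>)
  qed
  have "compact {\<pi>. \<forall>i j. \<pi> i j \<in> B i j}" by (intro compact_box_fun2) (simp add: B_def)
  moreover have "closed ?S"
    unfolding plan_def box_simplex_def plan_cost_def
    by (intro closed_Collect_conj closed_Collect_ball closed_Collect_all closed_Collect_imp closed_Collect_le
        closed_Collect_eq open_Collect_const continuous_on_sum continuous_on_mult continuous_on_const
        continuous_on_apply2)
  ultimately have "compact ({\<pi>. \<forall>i j. \<pi> i j \<in> B i j} \<inter> ?S)" by (rule compact_Int_closed)
  then show ?thesis using S_sub by (simp add: Int_absorb1)
qed

lemma optimal_plan_exists:
  assumes "0 \<le> e"
  shows "\<exists>\<pi>. plan \<pi> \<and> plan_cost \<pi> \<le> e \<and> (\<forall>\<pi>'. plan \<pi>' \<and> plan_cost \<pi>' \<le> e \<longrightarrow> plan_objective \<pi> \<le> plan_objective \<pi>')"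
proof -
  define S where "S = {\<pi>. plan \<pi> \<and> plan_cost \<pi> \<le> e \<and> (\<forall>i j. \<not> (i \<in> I \<and> j \<in> J) \<longrightarrow> \<pi> i j = 0)}"
  define restrict where "restrict \<pi> = (\<lambda>i j. if i \<in> I \<and> j \<in> J then \<pi> i j else 0)" for \<pi> :: "nat \<Rightarrow> nat \<Rightarrow> real"
  have restrict: "plan (restrict \<pi>) = plan \<pi>" "plan_objective (restrict \<pi>) = plan_objective \<pi>"
    "plan_cost (restrict \<pi>) = plan_cost \<pi>" for \<pi>
    unfolding restrict_def plan_def box_simplex_def plan_objective_def plan_cost_def by (auto intro!: sum.cong)
  then have restrict_in_S: "restrict \<pi> \<in> S" if "plan \<pi>" "plan_cost \<pi> \<le> e" for \<pi>
    using that by (auto simp: S_def restrict_def)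
  have "S \<noteq> {}"
  proof -
    obtain \<pi> where "plan \<pi>" "plan_cost \<pi> = 0" using zero_cost_plan_exists by blast
    then show ?thesis using restrict_in_S[of \<pi>] assms by auto
  qed
  moreover have "continuous_on S plan_objective"
    unfolding plan_objective_def by (intro continuous_intros continuous_on_apply2)
  ultimately obtain \<pi> where "\<pi> \<in> S" and min: "\<forall>\<pi>'\<in>S. plan_objective \<pi> \<le> plan_objective \<pi>'"
    using continuous_attains_inf[OF compact_supported_plans[of e, folded S_def]] by blast
  have "plan_objective \<pi> \<le> plan_objective \<pi>'" if "plan \<pi>'" "plan_cost \<pi>' \<le> e" for \<pi>'
    using min restrict_in_S[OF that] restrict(2)[of \<pi>'] by auto
  then show ?thesis using \<open>\<pi> \<in> S\<close> by (auto simp: S_def)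
qed

lemma lp_value_le:
  assumes "plan \<pi>" "plan_cost \<pi> \<le> e"
  shows "lp_value e \<le> plan_objective \<pi>"
proof -
  have "0 \<le> e" using plan_cost_nonneg assms by (meson order_trans)
  then obtain \<pi>0 where "\<forall>\<pi>'. plan \<pi>' \<and> plan_cost \<pi>' \<le> e \<longrightarrow> plan_objective \<pi>0 \<le> plan_objective \<pi>'"
    using optimal_plan_exists by blast
  then have "bdd_below (plan_objective ` {\<pi>. plan \<pi> \<and> plan_cost \<pi> \<le> e})" by (auto intro: bdd_belowI2)
  then show ?thesis unfolding lp_value_def using assms by (intro cINF_lower) auto
qed

lemma lp_value_attained:
  assumes "0 \<le> e"
  shows "\<exists>\<pi>. plan \<pi> \<and> plan_cost \<pi> \<le> e \<and> plan_objective \<pi> = lp_value e"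
proof -
  obtain \<pi> where \<pi>: "plan \<pi>" "plan_cost \<pi> \<le> e"
    and min: "\<forall>\<pi>'. plan \<pi>' \<and> plan_cost \<pi>' \<le> e \<longrightarrow> plan_objective \<pi> \<le> plan_objective \<pi>'"
    using optimal_plan_exists[OF assms] by blast
  have "plan_objective \<pi> \<le> lp_value e"
    unfolding lp_value_def using \<pi> min by (intro cINF_greatest) auto
  then show ?thesis using \<pi> lp_value_le[OF \<pi>] by force
qed

lemma lp_value_antimono:
  assumes "0 \<le> e" "e \<le> e'"
  shows "lp_value e' \<le> lp_value e"
proof -
  obtain \<pi> where "plan \<pi>" "plan_cost \<pi> \<le> e" "plan_objective \<pi> = lp_value e"
    using lp_value_attained[OF assms(1)] by blast
  then show ?thesis using lp_value_le[of \<pi> e'] assms(2) by simp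
qed

lemma convex_on_lp_value: "convex_on {0..} lp_value"
  unfolding convex_on_def
proof (intro conjI ballI allI impI)
  fix e1 e2 u v :: real
  assume "e1 \<in> {0..}" "e2 \<in> {0..}" and uv: "0 \<le> u" "0 \<le> v" "u + v = 1"
  then obtain \<pi>1 \<pi>2 where \<pi>1: "plan \<pi>1" "plan_cost \<pi>1 \<le> e1" "plan_objective \<pi>1 = lp_value e1"
    and \<pi>2: "plan \<pi>2" "plan_cost \<pi>2 \<le> e2" "plan_objective \<pi>2 = lp_value e2"
    using lp_value_attained by (metis atLeast_iff)
  have "u * plan_cost \<pi>1 + v * plan_cost \<pi>2 \<le> u * e1 + v * e2"
    using \<pi>1 \<pi>2 uv by (intro add_mono mult_left_mono) auto
  then show "lp_value (u *\<^sub>R e1 + v *\<^sub>R e2) \<le> u * lp_value e1 + v * lp_value e2"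
    using lp_value_le[OF plan_mix[OF \<pi>1(1) \<pi>2(1) uv]] \<pi>1 \<pi>2 by simp
qed simp

lemma zero_cost_collapse:
  assumes "plan \<pi>"
  obtains D where "plan D" and "plan_cost D = 0"
    and "plan_objective D = plan_objective \<pi> + (\<Sum>i\<in>I. \<Sum>j\<in>J. if c i j = 0 then 0 else \<pi> i j * (p j - p i))"
proof -
  define X where "X j = (\<Sum>i\<in>I. if c i j = 0 then 0 else \<pi> i j)" for j
  define D where "D i j = (if c i j = 0 then \<pi> i j else 0) + (if i = j then X j else 0)" for i j
  have colsum: "(\<Sum>i\<in>I. D i j) = (\<Sum>i\<in>I. \<pi> i j)" if "j \<in> J" for j
  proof -
    have "(\<Sum>i\<in>I. D i j) = (\<Sum>i\<in>I. if c i j = 0 then \<pi> i j else 0) + X j"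
      using finite_I J_subset_I that by (simp add: D_def sum.distrib subsetD)
    also have "\<dots> = (\<Sum>i\<in>I. \<pi> i j)"
      unfolding X_def sum.distrib[symmetric] by (intro sum.cong) auto
    finally show ?thesis .
  qed
  have "0 \<le> D i j" if "i \<in> I" "j \<in> J" for i j
    using assms that unfolding D_def X_def plan_def by (auto intro!: sum_nonneg add_nonneg_nonneg)
  then have plan_D: "plan D" using assms colsum by (simp add: plan_def box_simplex_def)
  have cost_D: "plan_cost D = 0"
    unfolding plan_cost_def using cost_diag by (intro sum.neutral ballI) (auto simp: D_def)
  have "plan_objective D = (\<Sum>i\<in>I. \<Sum>j\<in>J. (if c i j = 0 then \<pi> i j else 0) * p i) + (\<Sum>j\<in>J. X j * p j)"
    using sum_selection[OF finite_I, of J "\<lambda>j. j" X "\<lambda>i j. p i"] J_subset_I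
    by (auto simp: plan_objective_def D_def distrib_right sum.distrib)
  also have "(\<Sum>j\<in>J. X j * p j) = (\<Sum>i\<in>I. \<Sum>j\<in>J. if c i j = 0 then 0 else \<pi> i j * p j)"
    unfolding X_def sum_distrib_right by (subst sum.swap) (intro sum.cong refl; simp)
  also have "(\<Sum>i\<in>I. \<Sum>j\<in>J. (if c i j = 0 then \<pi> i j else 0) * p i) + \<dots>
      = plan_objective \<pi> + (\<Sum>i\<in>I. \<Sum>j\<in>J. if c i j = 0 then 0 else \<pi> i j * (p j - p i))"
    unfolding plan_objective_def sum.distrib[symmetric] by (intro sum.cong refl) (simp add: algebra_simps)
  finally show ?thesis by (rule that[OF plan_D cost_D])
qed

lemma collapse_plan:
  obtains M where "0 \<le> M"
    and "\<And>\<pi>. plan \<pi> \<Longrightarrow> \<exists>D. plan D \<and> plan_cost D = 0 \<and> plan_objective D \<le> plan_objective \<pi> + M * plan_cost \<pi>"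
proof -
  define cmin where "cmin = Min (insert 1 {c i j |i j. i \<in> I \<and> j \<in> J \<and> c i j \<noteq> 0})"
  have "{c i j |i j. i \<in> I \<and> j \<in> J \<and> c i j \<noteq> 0} \<subseteq> (\<lambda>(i, j). c i j) ` (I \<times> J)" by auto
  then have "finite {c i j |i j. i \<in> I \<and> j \<in> J \<and> c i j \<noteq> 0}"
    using finite_I finite_J by (meson finite_SigmaI finite_imageI finite_subset)
  then have cmin_pos: "0 < cmin" and cmin_le: "\<And>i j. i \<in> I \<Longrightarrow> j \<in> J \<Longrightarrow> c i j \<noteq> 0 \<Longrightarrow> cmin \<le> c i j"
    using cost_nonneg by (force simp: cmin_def, auto simp: cmin_def intro!: Min_le)
  define M where "M = 2 * (\<Sum>i\<in>I. \<bar>p i\<bar>) / cmin"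
  have "0 \<le> M" using cmin_pos by (simp add: M_def sum_nonneg)
  moreover have "\<exists>D. plan D \<and> plan_cost D = 0 \<and> plan_objective D \<le> plan_objective \<pi> + M * plan_cost \<pi>"
    if "plan \<pi>" for \<pi>
  proof -
    have step: "(if c i j = 0 then 0 else \<pi> i j * (p j - p i)) \<le> \<pi> i j * c i j * M" if "i \<in> I" "j \<in> J" for i j
    proof (cases "c i j = 0")
      case False
      have "\<bar>p k\<bar> \<le> (\<Sum>i\<in>I. \<bar>p i\<bar>)" if "k \<in> I" for k
        using finite_I that by (intro member_le_sum) auto
      then have "p j - p i \<le> 2 * (\<Sum>i\<in>I. \<bar>p i\<bar>)"
        using J_subset_I that by (smt (verit) subsetD abs_ge_self abs_ge_minus_self)
      also have "\<dots> = cmin * M" using cmin_pos by (simp add: M_def)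
      also have "\<dots> \<le> c i j * M" using cmin_le[OF that False] \<open>0 \<le> M\<close> by (rule mult_right_mono)
      finally show ?thesis using False \<open>plan \<pi>\<close> that by (simp add: plan_def mult_left_mono mult.assoc)
    qed simp
    have "plan_objective \<pi> + (\<Sum>i\<in>I. \<Sum>j\<in>J. if c i j = 0 then 0 else \<pi> i j * (p j - p i))
        \<le> plan_objective \<pi> + M * plan_cost \<pi>"
      using step by (simp add: plan_cost_def sum_distrib_left sum_mono mult.commute)
    moreover obtain D where "plan D" "plan_cost D = 0"
      "plan_objective D = plan_objective \<pi> + (\<Sum>i\<in>I. \<Sum>j\<in>J. if c i j = 0 then 0 else \<pi> i j * (p j - p i))"
      using zero_cost_collapse[OF \<open>plan \<pi>\<close>] .
    ultimately show ?thesis by auto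
  qed
  ultimately show ?thesis using that by blast
qed

lemma lp_value_right_lipschitz:
  obtains M where "\<And>e e'. 0 \<le> e \<Longrightarrow> e \<le> e' \<Longrightarrow> lp_value e - lp_value e' \<le> M * (e' - e)"
proof -
  obtain M where "0 \<le> M" and collapse: "\<And>\<pi>. plan \<pi> \<Longrightarrow>
      \<exists>D. plan D \<and> plan_cost D = 0 \<and> plan_objective D \<le> plan_objective \<pi> + M * plan_cost \<pi>"
    using collapse_plan by blast
  have "lp_value e - lp_value e' \<le> M * (e' - e)" if "0 \<le> e" "e \<le> e'" for e e'
  proof -
    have "0 \<le> e'" using that by simp
    then obtain \<pi> where \<pi>: "plan \<pi>" "plan_cost \<pi> \<le> e'" "plan_objective \<pi> = lp_value e'"
      using lp_value_attained by blast
    show ?thesis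
    proof (cases "plan_cost \<pi> \<le> e")
      case True
      then have "lp_value e \<le> lp_value e'" using lp_value_le[OF \<pi>(1)] \<pi>(3) by simp
      moreover have "0 \<le> M * (e' - e)" using that \<open>0 \<le> M\<close> by simp
      ultimately show ?thesis by linarith
    next
      case False
      obtain D where D: "plan D" "plan_cost D = 0" "plan_objective D \<le> plan_objective \<pi> + M * plan_cost \<pi>"
        using collapse[OF \<pi>(1)] by blast
      define s where "s = e / plan_cost \<pi>"
      have s: "0 \<le> s" "s \<le> 1" "s * plan_cost \<pi> = e" using False that by (auto simp: s_def field_simps)
      let ?mix = "\<lambda>i j. s * \<pi> i j + (1 - s) * D i j"
      have "lp_value e \<le> plan_objective ?mix"
        using s D by (intro lp_value_le plan_mix[OF \<pi>(1) D(1)]) auto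
      also have "\<dots> \<le> s * plan_objective \<pi> + (1 - s) * (plan_objective \<pi> + M * plan_cost \<pi>)"
        using s D by (simp add: mult_left_mono)
      also have "\<dots> = lp_value e' + M * (plan_cost \<pi> - e)" using s \<pi>(3) by (simp add: algebra_simps)
      also have "\<dots> \<le> lp_value e' + M * (e' - e)" using \<pi>(2) \<open>0 \<le> M\<close> by (simp add: mult_left_mono)
      finally show ?thesis by simp
    qed
  qed
  then show ?thesis by (rule that)
qed

section \<open>Duality\<close>

abbreviation h :: "nat \<Rightarrow> real \<Rightarrow> real" where
  "h j \<mu> \<equiv> hfun p c I j \<mu>"

abbreviation G :: "real \<Rightarrow> real \<Rightarrow> real \<Rightarrow> real" where
  "G eps \<equiv> Gfun lo hi p c I J eps"

lemma plan_lagrangian_ge: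
  assumes "plan \<pi>"
  shows "(\<Sum>j\<in>J. (\<Sum>i\<in>I. \<pi> i j) * h j \<mu>) \<le> plan_objective \<pi> + \<mu> * plan_cost \<pi>"
proof -
  have "(\<Sum>j\<in>J. (\<Sum>i\<in>I. \<pi> i j) * h j \<mu>) = (\<Sum>i\<in>I. \<Sum>j\<in>J. \<pi> i j * h j \<mu>)"
    by (subst sum.swap) (simp add: sum_distrib_right)
  also have "\<dots> \<le> (\<Sum>i\<in>I. \<Sum>j\<in>J. \<pi> i j * (p i + \<mu> * c i j))"
    using assms hfun_le[OF finite_I] by (intro sum_mono mult_left_mono) (auto simp: plan_def)
  also have "\<dots> = plan_objective \<pi> + \<mu> * plan_cost \<pi>"
    by (simp add: plan_objective_def plan_cost_def sum.distrib sum_distrib_left distrib_left mult.left_commute)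
  finally show ?thesis .
qed

lemma plan_lagrangian_attained:
  assumes "box_simplex lo hi J g"
  obtains \<pi> where "plan \<pi>" and "plan_objective \<pi> + \<mu> * plan_cost \<pi> = (\<Sum>j\<in>J. g j * h j \<mu>)"
proof -
  have "\<forall>j\<in>J. \<exists>i. i \<in> I \<and> h j \<mu> = p i + \<mu> * c i j"
    using hfun_attained[OF finite_I I_nonempty] by blast
  then obtain sel where sel: "\<forall>j\<in>J. sel j \<in> I \<and> h j \<mu> = p (sel j) + \<mu> * c (sel j) j"
    by metis
  define \<sigma> where "\<sigma> i j = (if i = sel j then g j else 0)" for i j
  have "\<forall>j\<in>J. sel j \<in> I" using sel by blast
  note \<sigma> = plan_of_selection[OF this assms, folded \<sigma>_def]
  have "plan_objective \<sigma> + \<mu> * plan_cost \<sigma> = (\<Sum>j\<in>J. g j * (p (sel j) + \<mu> * c (sel j) j))"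
    by (simp add: \<sigma>(2,3) sum_distrib_left sum.distrib algebra_simps)
  also have "\<dots> = (\<Sum>j\<in>J. g j * h j \<mu>)" using sel by simp
  finally show ?thesis by (rule that[OF \<sigma>(1)])
qed

lemma weak_duality:
  assumes "0 \<le> \<mu>" "plan \<pi>" "plan_cost \<pi> \<le> eps"
  shows "G eps l \<mu> \<le> plan_objective \<pi>"
proof -
  have "box_simplex lo hi J (\<lambda>j. \<Sum>i\<in>I. \<pi> i j)" using assms(2) by (simp add: plan_def)
  then have "G eps l \<mu> \<le> (\<Sum>j\<in>J. (\<Sum>i\<in>I. \<pi> i j) * h j \<mu>) - \<mu> * eps"
    using box_simplex_dual_le[of lo hi J _ "\<lambda>j. h j \<mu>" l] by (simp add: Gfun_eq_box_simplex_dual)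
  also have "\<dots> \<le> plan_objective \<pi> + \<mu> * plan_cost \<pi> - \<mu> * eps"
    using plan_lagrangian_ge[OF assms(2)] by simp
  also have "\<dots> \<le> plan_objective \<pi>"
    using mult_left_mono[OF assms(3,1)] by simp
  finally show ?thesis .
qed

lemma strong_duality:
  assumes "0 \<le> eps"
  obtains \<mu> j where "0 \<le> \<mu>" "j \<in> J" "G eps (h j \<mu>) \<mu> = lp_value eps"
proof -
  obtain M where "\<And>e'. eps \<le> e' \<Longrightarrow> lp_value eps - lp_value e' \<le> M * (e' - eps)"
    using lp_value_right_lipschitz assms by metis
  then obtain \<mu> where "0 \<le> \<mu>" and subgradient: "\<forall>e\<ge>0. lp_value eps - \<mu> * (e - eps) \<le> lp_value e"
    using convex_on_antimono_subgradient[OF convex_on_lp_value assms] lp_value_antimono[OF assms] by blast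
  obtain j g where "j \<in> J" "box_simplex lo hi J g"
    and j: "box_simplex_dual lo hi J (\<lambda>j. h j \<mu>) (h j \<mu>) = (\<Sum>j\<in>J. g j * h j \<mu>)"
    using box_simplex_dual_attained[OF finite_J lo_le_hi sum_lo_le sum_hi_ge] by blast
  obtain \<pi> where "plan \<pi>" and \<pi>: "plan_objective \<pi> + \<mu> * plan_cost \<pi> = (\<Sum>j\<in>J. g j * h j \<mu>)"
    using plan_lagrangian_attained[OF \<open>box_simplex lo hi J g\<close>] .
  have "lp_value eps - \<mu> * (plan_cost \<pi> - eps) \<le> lp_value (plan_cost \<pi>)"
    using subgradient plan_cost_nonneg[OF \<open>plan \<pi>\<close>] by blast
  then have "lp_value eps \<le> lp_value (plan_cost \<pi>) + \<mu> * (plan_cost \<pi> - eps)" by simp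
  also have "\<dots> \<le> plan_objective \<pi> + \<mu> * plan_cost \<pi> - \<mu> * eps"
    using lp_value_le[OF \<open>plan \<pi>\<close> order_refl] by (simp add: algebra_simps)
  also have "\<dots> = G eps (h j \<mu>) \<mu>" using \<pi> j by (simp add: Gfun_eq_box_simplex_dual)
  finally have "lp_value eps \<le> G eps (h j \<mu>) \<mu>" .
  moreover obtain \<pi>0 where "plan \<pi>0" "plan_cost \<pi>0 \<le> eps" "plan_objective \<pi>0 = lp_value eps"
    using lp_value_attained[OF assms] by blast
  then have "G eps (h j \<mu>) \<mu> \<le> lp_value eps" using weak_duality[OF \<open>0 \<le> \<mu>\<close>] by metis
  ultimately show ?thesis using that \<open>0 \<le> \<mu>\<close> \<open>j \<in> J\<close> by simp
qed

lemma lp_feasible_iff: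
  "lp_feasible lo hi c I J eps \<gamma> \<gamma>h \<pi> \<longleftrightarrow> plan \<pi> \<and> plan_cost \<pi> \<le> eps
     \<and> (\<forall>j\<in>J. \<gamma>h j = (\<Sum>i\<in>I. \<pi> i j)) \<and> (\<forall>i\<in>I. \<gamma> i = (\<Sum>j\<in>J. \<pi> i j))"
  by (auto simp: lp_feasible_def plan_def box_simplex_def plan_cost_def cong: sum.cong)

lemma lp_objective_eq_plan_objective:
  "\<forall>i\<in>I. \<gamma> i = (\<Sum>j\<in>J. \<pi> i j) \<Longrightarrow> lp_objective p I \<gamma> = plan_objective \<pi>"
  unfolding lp_objective_def plan_objective_def by (auto simp: sum_distrib_right cong: sum.cong)

lemma lp_duality:
  assumes "0 \<le> eps"
  shows "\<exists>l0 \<mu>0 \<gamma>0 \<gamma>h0 \<pi>0. 0 \<le> \<mu>0 \<and> (\<forall>l \<mu>. 0 \<le> \<mu> \<longrightarrow> G eps l \<mu> \<le> G eps l0 \<mu>0)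
     \<and> lp_feasible lo hi c I J eps \<gamma>0 \<gamma>h0 \<pi>0
     \<and> (\<forall>\<gamma> \<gamma>h \<pi>. lp_feasible lo hi c I J eps \<gamma> \<gamma>h \<pi> \<longrightarrow> lp_objective p I \<gamma>0 \<le> lp_objective p I \<gamma>)
     \<and> G eps l0 \<mu>0 = lp_objective p I \<gamma>0"
proof -
  obtain \<mu>0 j where "0 \<le> \<mu>0" and dual: "G eps (h j \<mu>0) \<mu>0 = lp_value eps"
    using strong_duality[OF assms] .
  obtain \<pi>0 where \<pi>0: "plan \<pi>0" "plan_cost \<pi>0 \<le> eps" "plan_objective \<pi>0 = lp_value eps"
    using lp_value_attained[OF assms] by blast
  define \<gamma>0 where "\<gamma>0 i = (\<Sum>j\<in>J. \<pi>0 i j)" for i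
  define \<gamma>h0 where "\<gamma>h0 j = (\<Sum>i\<in>I. \<pi>0 i j)" for j
  have "lp_feasible lo hi c I J eps \<gamma>0 \<gamma>h0 \<pi>0" using \<pi>0 by (simp add: lp_feasible_iff \<gamma>0_def \<gamma>h0_def)
  moreover have obj: "lp_objective p I \<gamma>0 = lp_value eps"
    using \<pi>0(3) lp_objective_eq_plan_objective[of \<gamma>0 \<pi>0] by (simp add: \<gamma>0_def)
  moreover have "lp_objective p I \<gamma>0 \<le> lp_objective p I \<gamma>" if "lp_feasible lo hi c I J eps \<gamma> \<gamma>h \<pi>" for \<gamma> \<gamma>h \<pi>
  proof -
    have "plan \<pi>" "plan_cost \<pi> \<le> eps" "\<forall>i\<in>I. \<gamma> i = (\<Sum>j\<in>J. \<pi> i j)"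
      using that by (simp_all add: lp_feasible_iff)
    then show ?thesis using lp_value_le obj lp_objective_eq_plan_objective by metis
  qed
  moreover have "G eps l \<mu> \<le> G eps (h j \<mu>0) \<mu>0" if "0 \<le> \<mu>" for l \<mu>
    using weak_duality[OF that \<pi>0(1,2)] \<pi>0(3) dual by simp
  ultimately show ?thesis using \<open>0 \<le> \<mu>0\<close> dual by (metis (no_types))
qed

end

lemma region_cost_nonneg:
  assumes "A \<noteq> {}" "B \<noteq> {}"
  shows "0 \<le> region_cost s A B"
  unfolding region_cost_def using assms by (intro cInf_greatest) auto

lemma region_cost_self:
  assumes "A \<noteq> {}"
  shows "region_cost s A A = 0"
  unfolding region_cost_def using assms by (intro cInf_eq_minimum) force+

lemma box_transport_abstraction:
  assumes lo_hi: "\<forall>q'\<in>{1..N}. 0 \<le> lo q u q' \<and> lo q u q' \<le> hi q u q'"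
    and sum_lo: "(\<Sum>q'\<in>{1..N}. lo q u q') \<le> 1" and sum_hi: "1 \<le> (\<Sum>q'\<in>{1..N}. hi q u q')"
    and supp: "idx_P N hi q u \<subseteq> idx_W N f R W q u"
  shows "box_transport (lo q u) (hi q u) (cost_mat s R) (idx_W N f R W q u) (idx_P N hi q u)"
proof
  let ?I = "idx_W N f R W q u" and ?J = "idx_P N hi q u"
  have J_sub: "?J \<subseteq> {1..N}" by (auto simp: idx_P_def)
  have nonempty: "R i \<noteq> {}" if "i \<in> ?I" for i using that by (auto simp: idx_W_def)
  show "finite ?I" by (rule finite_subset[of _ "{1..N}"]) (auto simp: idx_W_def)
  show "?J \<subseteq> ?I" by (rule supp)
  show "\<forall>j\<in>?J. 0 \<le> lo q u j" "\<forall>j\<in>?J. lo q u j \<le> hi q u j" using lo_hi J_sub by auto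
  show "(\<Sum>j\<in>?J. lo q u j) \<le> 1"
    using sum_lo sum_mono2[OF _ J_sub, of "lo q u"] lo_hi by force
  have "(\<Sum>j\<in>?J. hi q u j) = (\<Sum>j\<in>{1..N}. hi q u j)"
    using lo_hi J_sub by (intro sum.mono_neutral_left) (force simp: idx_P_def)+
  then show "1 \<le> (\<Sum>j\<in>?J. hi q u j)" using sum_hi by simp
  show "\<forall>i\<in>?I. \<forall>j\<in>?J. 0 \<le> cost_mat s R i j"
    using nonempty supp by (auto simp: cost_mat_def intro!: region_cost_nonneg)
  show "\<forall>j\<in>?J. cost_mat s R j j = 0"
    using nonempty supp by (auto simp: cost_mat_def intro!: region_cost_self)
qed

theorem theorem4:
  fixes f :: "nat \<Rightarrow> real^'n \<Rightarrow> real^'n"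
    and pv :: "(real^'n) measure"
    and W X Xtgt :: "(real^'n) set"
    and R :: "nat \<Rightarrow> (real^'n) set"
    and lo hi :: "nat \<Rightarrow> nat \<Rightarrow> nat \<Rightarrow> real"
    and p :: "nat \<Rightarrow> real"
    and s \<epsilon> :: real
    and m N iu qi a :: nat
  defines "T \<equiv> trans_kernel pv f"
    and "c \<equiv> cost_mat s R"
    and "I \<equiv> idx_W N f R W qi a"
    and "J \<equiv> idx_P N hi qi a"
    and "eps \<equiv> \<epsilon> powr s"
    and "G \<equiv> Gfun (lo qi a) (hi qi a) p (cost_mat s R) (idx_W N f R W qi a) (idx_P N hi qi a) (\<epsilon> powr s)"
    and "h \<equiv> (\<lambda>j \<mu>. hfun p (cost_mat s R) (idx_W N f R W qi a) j \<mu>)"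
  assumes s_ge: "1 \<le> s" and eps_ge: "0 \<le> \<epsilon>"
    and cont: "\<forall>u\<in>{1..m}. continuous_on UNIV (f u)"
    and pv_prob: "prob_space pv" and pv_sets: "sets pv = sets borel"
    and pv_moment: "integrable pv (\<lambda>v. norm v powr s)"
    and X_bdd: "bounded X" and X_borel: "X \<in> sets borel" and tgt_sub: "Xtgt \<subseteq> X"
    and iu_in: "iu \<in> {1..N}" and R_iu: "R iu = - X"
    and R_borel: "\<forall>i\<in>{1..N} - {iu}. R i \<in> sets borel"
    and R_tgt: "\<forall>i\<in>{1..N} - {iu}. R i \<subseteq> Xtgt \<or> R i \<inter> Xtgt = {}"
    and R_disj: "\<forall>i\<in>{1..N}. \<forall>j\<in>{1..N}. i \<noteq> j \<longrightarrow> R i \<inter> R j = {}"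
    and R_cover: "(\<Union>i\<in>{1..N} - {iu}. R i) = X"
    and bnd_range: "\<forall>q\<in>{1..N}. \<forall>u\<in>{1..m}. \<forall>q'\<in>{1..N}.
                      0 \<le> lo q u q' \<and> lo q u q' \<le> hi q u q' \<and> hi q u q' \<le> 1"
    and bnd_sum: "\<forall>q\<in>{1..N}. \<forall>u\<in>{1..m}.
                      (\<Sum>q'\<in>{1..N}. lo q u q') \<le> 1 \<and> 1 \<le> (\<Sum>q'\<in>{1..N}. hi q u q')"
    and lo_sound: "\<forall>q\<in>{1..N} - {iu}. \<forall>u\<in>{1..m}. \<forall>q'\<in>{1..N}.
                      \<forall>x\<in>R q. lo q u q' \<le> T u x (R q')"
    and hi_sound: "\<forall>q\<in>{1..N} - {iu}. \<forall>u\<in>{1..m}. \<forall>q'\<in>{1..N}.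
                      \<forall>x\<in>R q. T u x (R q') \<le> hi q u q'"
    and unsafe_abs: "\<forall>u\<in>{1..m}. lo iu u iu = 1 \<and> hi iu u iu = 1"
    and supp_W: "\<forall>q\<in>{1..N}. \<forall>u\<in>{1..m}.
                   idx_P N hi q u \<subseteq> idx_W N f R W q u"
    and p_nonneg: "\<forall>i\<in>{1..N}. 0 \<le> p i"
    and qi_in: "qi \<in> {1..N}" and a_in: "a \<in> {1..m}"
  shows "concave_on (UNIV \<times> {0..}) (\<lambda>(l, \<mu>). G l \<mu>)
    \<and> (\<exists>l0 \<mu>0 \<gamma>0 \<gamma>h0 \<pi>0. 0 \<le> \<mu>0
          \<and> (\<forall>l \<mu>. 0 \<le> \<mu> \<longrightarrow> G l \<mu> \<le> G l0 \<mu>0)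
          \<and> lp_feasible (lo qi a) (hi qi a) c I J eps \<gamma>0 \<gamma>h0 \<pi>0
          \<and> (\<forall>\<gamma> \<gamma>h \<pi>. lp_feasible (lo qi a) (hi qi a) c I J eps \<gamma> \<gamma>h \<pi>
                 \<longrightarrow> lp_objective p I \<gamma>0 \<le> lp_objective p I \<gamma>)
          \<and> G l0 \<mu>0 = lp_objective p I \<gamma>0)
    \<and> (\<forall>\<mu>\<ge>0. (\<forall>l. G l \<mu> \<le> (MAX j\<in>J. G (h j \<mu>) \<mu>))
          \<and> (\<exists>l. G l \<mu> = (MAX j\<in>J. G (h j \<mu>) \<mu>)))"
proof -
  \<comment> \<open>Only the interval bounds and the support inclusion of the abstraction are used.\<close>
  interpret box_transport "lo qi a" "hi qi a" p c I J
    unfolding c_def I_def J_def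
    using bnd_range bnd_sum supp_W qi_in a_in by (intro box_transport_abstraction) auto
  have "concave_on UNIV (\<lambda>(l, \<mu>). G l \<mu>)"
    unfolding G_def using finite_I I_nonempty lo_nonneg lo_le_hi
    by (intro concave_on_Gfun) (auto simp: c_def I_def J_def)
  then have "concave_on (UNIV \<times> {0..}) (\<lambda>(l, \<mu>). G l \<mu>)"
    unfolding concave_on_def by (rule convex_on_subset) (auto intro: convex_Times)
  moreover have "0 \<le> eps" by (simp add: eps_def)
  ultimately show ?thesis
    using lp_duality Gfun_max_at_hfun[OF finite_J lo_le_hi sum_lo_le sum_hi_ge]
    unfolding G_def h_def c_def I_def J_def eps_def by blast
qed

end
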